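(* Let $F(z,t)=\sum_{n\ge1}\sum_{m\ge0}a_{n,m}z^nt^m$ be very nice and let $\Theta=(\Theta_1,\ldots,\Theta_r)$ be a (possibly empty) sequence of the operators $\mathcal E,\mathcal N$ containing no two consecutive $\mathcal N$'s. Then $(\Theta F)(z,1)$ is a rational function of $z$, where $\Theta F=\Theta_r\circ\cdots\circ\Theta_1F$.
   Context: A bivariate series $F(z,t)$ is nice if $F(z,z^k)$ is a rational function of $z$ for every integer $k\ge0$; it is very nice if it is nice and $F(z,0)$ is also rational. For $G(z,t)=\sum_{n\ge1}\sum_{m\ge0}a_{n,m}z^nt^m$: $\mathcal E G(z,t)=\frac{G(z,1)-ztG(z,zt)}{1-zt}$ and $\mathcal N G(z,t)=G(z,0)+\sum_{n\ge1}\sum_{m\ge1}a_{n,m}\frac{1}{1-z^m}\cdot\frac{1-(tz)^m}{1-tz}z^n$. *)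

theory Defs
  imports "HOL-Computational_Algebra.Computational_Algebra"
begin

text \<open>A bivariate series F(z,t) = sum a_{n,m} z^n t^m in which every z-coefficient is a
  polynomial in t is represented as a power series in z with coefficients in 'a poly:
  F $ n is the polynomial sum_m a_{n,m} t^m.\<close>

type_synonym 'a bivar = "'a poly fps"

definition bcoeff :: "'a::zero bivar \<Rightarrow> nat \<Rightarrow> nat \<Rightarrow> 'a" where
  "bcoeff F n m = coeff (F $ n) m"

definition eval_t :: "'a::comm_semiring_1 \<Rightarrow> 'a bivar \<Rightarrow> 'a fps" where
  "eval_t c F = Abs_fps (\<lambda>n. poly (F $ n) c)"

text \<open>F(z,z^k): the coefficient of z^N is the sum of a_{n,m} over n + k*m = N.\<close>
definition subst_zk :: "nat \<Rightarrow> 'a::comm_semiring_1 bivar \<Rightarrow> 'a fps" where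
  "subst_zk k F = Abs_fps (\<lambda>N. \<Sum>n\<le>N. \<Sum>m\<le>degree (F $ n).
      if n + k * m = N then bcoeff F n m else 0)"

definition rational_fps :: "'a::field fps \<Rightarrow> bool" where
  "rational_fps f \<longleftrightarrow> (\<exists>p q :: 'a poly. q \<noteq> 0 \<and> fps_of_poly q * f = fps_of_poly p)"

definition nice :: "'a::field bivar \<Rightarrow> bool" where
  "nice F \<longleftrightarrow> (\<forall>k. rational_fps (subst_zk k F))"

definition very_nice :: "'a::field bivar \<Rightarrow> bool" where
  "very_nice F \<longleftrightarrow> nice F \<and> rational_fps (eval_t 0 F)"

text \<open>Operator E: (G(z,1) - z t G(z,zt)) / (1 - zt), with 1/(1-zt) = sum_i z^i t^i.\<close>
definition geom_zt :: "'a::comm_ring_1 bivar" where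
  "geom_zt = Abs_fps (\<lambda>i. monom 1 i)"

definition const_t :: "'a::comm_ring_1 fps \<Rightarrow> 'a bivar" where
  "const_t f = Abs_fps (\<lambda>n. [:f $ n:])"

text \<open>G(z,zt): coefficient of z^N t^m is a_{N-m,m}.\<close>
definition subst_zt :: "'a::comm_ring_1 bivar \<Rightarrow> 'a bivar" where
  "subst_zt G = Abs_fps (\<lambda>N. \<Sum>n\<le>N. monom (bcoeff G n (N - n)) (N - n))"

definition opE :: "'a::comm_ring_1 bivar \<Rightarrow> 'a bivar" where
  "opE G = (const_t (eval_t 1 G) - fps_X * fps_const [:0, 1:] * subst_zt G) * geom_zt"

text \<open>Operator N: G(z,0) + sum_{n>=1, m>=1} a_{n,m} z^n (1/(1-z^m)) (1-(tz)^m)/(1-tz),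
  expanded with 1/(1-z^m) = sum_i z^{m i} and (1-(tz)^m)/(1-tz) = sum_{j<m} t^j z^j,
  so that the coefficient of z^N collects a_{n,m} t^j over n + m*i + j = N, j < m.\<close>
definition opN :: "'a::comm_ring_1 bivar \<Rightarrow> 'a bivar" where
  "opN G = Abs_fps (\<lambda>N. [:bcoeff G N 0:] +
     (\<Sum>n\<in>{1..N}. \<Sum>m\<in>{1..degree (G $ n)}. \<Sum>i\<le>N. \<Sum>j<m.
        if n + m * i + j = N then monom (bcoeff G n m) j else 0))"

datatype op = E | N

fun apply_op :: "op \<Rightarrow> 'a::comm_ring_1 bivar \<Rightarrow> 'a bivar" where
  "apply_op E G = opE G"
| "apply_op N G = opN G"

definition apply_ops :: "op list \<Rightarrow> 'a::comm_ring_1 bivar \<Rightarrow> 'a bivar" where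
  "apply_ops \<Theta> F = foldl (\<lambda>G \<theta>. apply_op \<theta> G) F \<Theta>"

definition no_consecutive_N :: "op list \<Rightarrow> bool" where
  "no_consecutive_N \<Theta> \<longleftrightarrow> (\<forall>i. Suc i < length \<Theta> \<longrightarrow> \<not> (\<Theta> ! i = N \<and> \<Theta> ! Suc i = N))"

end

theory Submission
  imports Defs
begin

text \<open>Substituting \<open>t = z^k\<close> turns each operator into a linear relation between the rational
  functions \<open>G(z, z^i)\<close>. The operator \<open>\<E>\<close> satisfies \<open>\<E>G = G(z,1) - zt G(z,zt) + zt \<E>G\<close>, whence
  \<open>(1 - z^(k+1)) (\<E>G)(z,z^k) = G(z,1) - z^(k+1) G(z,z^(k+1))\<close> and \<open>(\<E>G)(z,0) = G(z,1)\<close>: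
  \<open>\<E>\<close> maps nice series to very nice ones. For \<open>G\<close> without a \<open>z^0\<close> term,
  \<open>(1 - z^(k+1)) (\<N>G)(z,z^k) = (1 - z^(k+1)) G(z,0) + (\<Sum>i\<le>k. G(z,z^i) - G(z,0))\<close>, so \<open>\<N>\<close> maps very
  nice series to nice ones. As no two \<open>\<N>\<close>'s are adjacent, each \<open>\<N>\<close> is applied to \<open>F\<close> or to an
  \<open>\<E>\<close>-image, hence to a very nice series, so every intermediate series is nice; finally
  \<open>(\<Theta>F)(z,1)\<close> is the case \<open>k = 0\<close>.\<close>

subsection \<open>Rational power series\<close>

lemma rational_fps_0: "rational_fps (0 :: 'a::field fps)"
  unfolding rational_fps_def by (rule exI[of _ 0], rule exI[of _ 1]) simp

lemma rational_fps_add: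
  fixes f g :: "'a::field fps"
  assumes "rational_fps f" "rational_fps g"
  shows "rational_fps (f + g)"
proof -
  obtain p1 q1 where 1: "q1 \<noteq> 0" "fps_of_poly q1 * f = fps_of_poly p1"
    using assms(1) unfolding rational_fps_def by blast
  obtain p2 q2 where 2: "q2 \<noteq> 0" "fps_of_poly q2 * g = fps_of_poly p2"
    using assms(2) unfolding rational_fps_def by blast
  have "fps_of_poly (q1 * q2) * (f + g) = fps_of_poly (q2 * p1 + q1 * p2)"
    using 1 2 by (simp add: fps_of_poly_mult fps_of_poly_add algebra_simps)
  then show ?thesis
    unfolding rational_fps_def using 1 2 by (metis mult_eq_0_iff)
qed

lemma rational_fps_poly_mult:
  fixes f :: "'a::field fps"
  assumes "rational_fps f"
  shows "rational_fps (fps_of_poly r * f)"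
proof -
  obtain p q where "q \<noteq> 0" "fps_of_poly q * f = fps_of_poly p"
    using assms unfolding rational_fps_def by blast
  then have "q \<noteq> 0 \<and> fps_of_poly q * (fps_of_poly r * f) = fps_of_poly (r * p)"
    by (simp add: fps_of_poly_mult mult.left_commute)
  then show ?thesis unfolding rational_fps_def by blast
qed

lemma rational_fps_diff:
  fixes f g :: "'a::field fps"
  assumes "rational_fps f" "rational_fps g"
  shows "rational_fps (f - g)"
  using rational_fps_add[OF assms(1) rational_fps_poly_mult[OF assms(2), of "-1"]]
  by (simp add: fps_of_poly_uminus)

lemma rational_fps_sum:
  fixes f :: "'b \<Rightarrow> 'a::field fps"
  assumes "\<And>i. i \<in> A \<Longrightarrow> rational_fps (f i)"
  shows "rational_fps (sum f A)"
  using assms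
  by (induction A rule: infinite_finite_induct) (auto simp: rational_fps_0 intro: rational_fps_add)

lemma rational_fps_X_power_mult:
  fixes f :: "'a::field fps"
  assumes "rational_fps f"
  shows "rational_fps (fps_X ^ j * f)"
  using rational_fps_poly_mult[OF assms, of "monom 1 j"] by (simp add: fps_of_poly_monom')

lemma rational_fps_cancel_poly:
  fixes f :: "'a::field fps"
  assumes "rational_fps (fps_of_poly r * f)" "r \<noteq> 0"
  shows "rational_fps f"
proof -
  obtain p q where "q \<noteq> 0" "fps_of_poly q * (fps_of_poly r * f) = fps_of_poly p"
    using assms(1) unfolding rational_fps_def by blast
  then have "q * r \<noteq> 0 \<and> fps_of_poly (q * r) * f = fps_of_poly p"
    using assms(2) by (simp add: fps_of_poly_mult mult.assoc)
  then show ?thesis unfolding rational_fps_def by blast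
qed

lemma fps_of_poly_one_minus_monom:
  "fps_of_poly (1 - monom 1 j) = (1 - fps_X ^ j :: 'a::comm_ring_1 fps)"
  by (simp add: fps_of_poly_diff fps_of_poly_monom')

lemma rational_fps_cancel_one_minus_X_power:
  fixes f :: "'a::field fps"
  assumes "rational_fps ((1 - fps_X ^ Suc j) * f)"
  shows "rational_fps f"
proof (rule rational_fps_cancel_poly)
  show "rational_fps (fps_of_poly (1 - monom 1 (Suc j)) * f)"
    using assms by (simp only: fps_of_poly_one_minus_monom)
  have "coeff (1 - monom 1 (Suc j)) 0 \<noteq> (0 :: 'a)" by (simp add: coeff_monom)
  then show "1 - monom 1 (Suc j) \<noteq> (0 :: 'a poly)" by (metis coeff_0)
qed


subsection \<open>Substituting \<open>t = z^k\<close>\<close>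

lemma bivar_degree_bound: "\<exists>D. \<forall>n\<le>M. degree ((G :: 'a::zero bivar) $ n) \<le> D"
  by (rule exI[of _ "\<Sum>n\<le>M. degree (G $ n)"]) (auto intro: member_le_sum)

lemma subst_zk_nth_support:
  fixes G :: "'a::comm_semiring_1 bivar"
  assumes "finite S"
    and "\<And>n m. n + k * m = M \<Longrightarrow> (n, m) \<notin> S \<Longrightarrow> bcoeff G n m = 0"
  shows "subst_zk k G $ M = (\<Sum>(n, m)\<in>S. if n + k * m = M then bcoeff G n m else 0)"
proof -
  define g where "g = (\<lambda>(n, m). if n + k * m = M then bcoeff G n m else (0::'a))"
  define A where "A = Sigma {..M} (\<lambda>n. {..degree (G $ n)})"
  have "subst_zk k G $ M = sum g A"
    unfolding subst_zk_def A_def g_def by (simp add: sum.Sigma)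
  also have "\<dots> = sum g (A - {x. g x = 0})"
    unfolding A_def by (simp add: sum.setdiff_irrelevant)
  also have "A - {x. g x = 0} = S - {x. g x = 0}"
  proof (intro set_eqI iffI)
    fix p assume p: "p \<in> A - {x. g x = 0}"
    then obtain n m where "p = (n, m)" "n + k * m = M" "bcoeff G n m \<noteq> 0"
      by (cases p) (auto simp: g_def split: if_splits)
    then show "p \<in> S - {x. g x = 0}" using assms(2)[of n m] p by auto
  next
    fix p assume p: "p \<in> S - {x. g x = 0}"
    then obtain n m where nm: "p = (n, m)" "n + k * m = M" "bcoeff G n m \<noteq> 0"
      by (cases p) (auto simp: g_def split: if_splits)
    then have "m \<le> degree (G $ n)" by (simp add: bcoeff_def le_degree)
    with nm p show "p \<in> A - {x. g x = 0}" by (auto simp: A_def)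
  qed
  also have "sum g (S - {x. g x = 0}) = sum g S"
    using assms(1) by (simp add: sum.setdiff_irrelevant)
  finally show ?thesis by (simp add: g_def)
qed

lemma subst_zk_nth_degree_le:
  fixes G :: "'a::comm_semiring_1 bivar"
  assumes "\<And>n. n \<le> M \<Longrightarrow> degree (G $ n) \<le> D"
  shows "subst_zk k G $ M = (\<Sum>n\<le>M. \<Sum>m\<le>D. if n + k * m = M then bcoeff G n m else 0)"
proof -
  have "subst_zk k G $ M = (\<Sum>(n, m)\<in>{..M} \<times> {..D}. if n + k * m = M then bcoeff G n m else 0)"
  proof (rule subst_zk_nth_support)
    fix n m assume "n + k * m = M" "(n, m) \<notin> {..M} \<times> {..D}"
    then have "degree (G $ n) < m" using assms[of n] by auto
    then show "bcoeff G n m = 0" by (simp add: bcoeff_def coeff_eq_0)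
  qed simp
  then show ?thesis by (simp add: sum.cartesian_product)
qed

lemma eval_t_1_eq_subst_zk_0: "eval_t 1 G = subst_zk 0 (G :: 'a::comm_semiring_1 bivar)"
proof (rule fps_ext)
  fix N
  have "subst_zk 0 G $ N = (\<Sum>n\<le>N. if n = N then \<Sum>m\<le>degree (G $ n). bcoeff G n m else 0)"
    unfolding subst_zk_def fps_nth_Abs_fps by (intro sum.cong) auto
  then show "eval_t 1 G $ N = subst_zk 0 G $ N"
    by (simp add: eval_t_def bcoeff_def poly_altdef)
qed

lemma subst_zk_const_t: "subst_zk k (const_t f) = (f :: 'a::comm_ring_1 fps)"
proof (rule fps_ext)
  fix N
  have "subst_zk k (const_t f) $ N = (\<Sum>n\<le>N. if n = N then f $ n else 0)"
    unfolding subst_zk_def fps_nth_Abs_fps by (intro sum.cong) (auto simp: const_t_def bcoeff_def)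
  then show "subst_zk k (const_t f) $ N = f $ N" by simp
qed

lemma eval_t_add: "eval_t c (F + G) = eval_t c F + (eval_t c G :: 'a::comm_semiring_1 fps)"
  by (rule fps_ext) (simp add: eval_t_def)

lemma eval_t_diff: "eval_t c (F - G) = eval_t c F - (eval_t c G :: 'a::comm_ring_1 fps)"
  by (rule fps_ext) (simp add: eval_t_def)

lemma eval_t_const_t: "eval_t c (const_t f) = (f :: 'a::comm_ring_1 fps)"
  by (rule fps_ext) (simp add: eval_t_def const_t_def)

lemma subst_zk_diff:
  fixes G H :: "'a::comm_ring_1 bivar"
  shows "subst_zk k (G - H) = subst_zk k G - subst_zk k H"
proof (rule fps_ext)
  fix M
  obtain D1 D2 where "\<forall>n\<le>M. degree (G $ n) \<le> D1" "\<forall>n\<le>M. degree (H $ n) \<le> D2"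
    using bivar_degree_bound by metis
  then have G: "degree (G $ n) \<le> max D1 D2" and H: "degree (H $ n) \<le> max D1 D2"
    and GH: "degree ((G - H) $ n) \<le> max D1 D2" if "n \<le> M" for n
    using that degree_diff_le_max[of "G $ n" "H $ n"] by fastforce+
  show "subst_zk k (G - H) $ M = (subst_zk k G - subst_zk k H) $ M"
    by (simp add: subst_zk_nth_degree_le[OF G] subst_zk_nth_degree_le[OF H]
        subst_zk_nth_degree_le[OF GH] sum_subtractf[symmetric])
       (auto simp: bcoeff_def intro!: sum.cong)
qed

lemma subst_zk_add:
  fixes G H :: "'a::comm_ring_1 bivar"
  shows "subst_zk k (G + H) = subst_zk k G + subst_zk k H"
  using subst_zk_diff[of k "G + H" H] by (simp add: algebra_simps)

subsection \<open>Multiplication by \<open>zt\<close> and the operator \<open>\<E>\<close>\<close>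

definition times_zt :: "'a::comm_ring_1 bivar \<Rightarrow> 'a bivar" where
  "times_zt H = fps_X * fps_const [:0, 1:] * H"

lemma times_zt_nth: "times_zt H $ n = (if n = 0 then 0 else [:0, 1:] * H $ (n - 1))"
  unfolding times_zt_def by (simp add: mult.assoc fps_X_mult_nth)

lemma bcoeff_times_zt:
  "bcoeff (times_zt H) n m = (if n = 0 \<or> m = 0 then 0 else bcoeff H (n - 1) (m - 1))"
  by (cases m) (auto simp: bcoeff_def times_zt_nth coeff_pCons)

lemma eval_t_0_times_zt: "eval_t 0 (times_zt H) = 0"
  by (rule fps_ext) (simp add: eval_t_def times_zt_nth)

lemma subst_zk_times_zt:
  fixes H :: "'a::comm_ring_1 bivar"
  shows "subst_zk k (times_zt H) = fps_X ^ Suc k * subst_zk k H"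
proof (rule fps_ext)
  fix M
  define M' where "M' = M - Suc k"
  obtain D where D: "\<And>n. n \<le> M' \<Longrightarrow> degree (H $ n) \<le> D"
    using bivar_degree_bound by metis
  let ?S = "(\<lambda>(n, m). (Suc n, Suc m)) ` ({..M'} \<times> {..D})"
  have "subst_zk k (times_zt H) $ M
      = (\<Sum>(n, m)\<in>?S. if n + k * m = M then bcoeff (times_zt H) n m else 0)"
  proof (rule subst_zk_nth_support)
    fix n m assume nm: "n + k * m = M" "(n, m) \<notin> ?S"
    show "bcoeff (times_zt H) n m = 0"
    proof (cases "n = 0 \<or> m = 0")
      case False
      then obtain a b where ab: "n = Suc a" "m = Suc b" by (metis not0_implies_Suc)
      then have "a \<le> M'" using nm(1) unfolding M'_def by simp
      with nm(2) ab have "degree (H $ a) < b" using D[of a] by (auto simp: image_iff)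
      then show ?thesis using ab by (simp add: bcoeff_times_zt) (simp add: bcoeff_def coeff_eq_0)
    qed (auto simp: bcoeff_times_zt)
  qed simp
  also have "\<dots> = (\<Sum>(n, m)\<in>{..M'} \<times> {..D}. if Suc n + k * Suc m = M then bcoeff H n m else 0)"
    by (subst sum.reindex) (auto simp: inj_on_def bcoeff_times_zt intro!: sum.cong)
  also have "\<dots> = (if M < Suc k then 0 else subst_zk k H $ M')"
    by (auto simp: subst_zk_nth_degree_le[OF D] sum.cartesian_product M'_def intro!: sum.neutral sum.cong)
  also have "\<dots> = (fps_X ^ Suc k * subst_zk k H) $ M"
    by (simp add: fps_X_power_mult_nth M'_def del: power_Suc)
  finally show "subst_zk k (times_zt H) $ M = (fps_X ^ Suc k * subst_zk k H) $ M" .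
qed

lemma coeff_subst_zt: "coeff (subst_zt G $ Q) m = (if m \<le> Q then bcoeff G (Q - m) m else 0)"
proof -
  have "coeff (subst_zt G $ Q) m = (\<Sum>n\<le>Q. if n = Q - m \<and> m \<le> Q then bcoeff G n m else 0)"
    unfolding subst_zt_def fps_nth_Abs_fps coeff_sum
    by (rule sum.cong) (auto simp: coeff_monom)
  then show ?thesis by (simp add: sum.delta')
qed

lemma subst_zk_subst_zt:
  fixes G :: "'a::comm_ring_1 bivar"
  shows "subst_zk k (subst_zt G) = subst_zk (Suc k) G"
proof (rule fps_ext)
  fix M
  obtain D where D: "\<And>n. n \<le> M \<Longrightarrow> degree (G $ n) \<le> D"
    using bivar_degree_bound by metis
  let ?S = "(\<lambda>(n, m). (n + m, m)) ` ({..M} \<times> {..D})"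
  have "subst_zk k (subst_zt G) $ M
      = (\<Sum>(n, m)\<in>?S. if n + k * m = M then bcoeff (subst_zt G) n m else 0)"
  proof (rule subst_zk_nth_support)
    fix Q m assume Qm: "Q + k * m = M" "(Q, m) \<notin> ?S"
    show "bcoeff (subst_zt G) Q m = 0"
    proof (cases "m \<le> Q")
      case True
      then have "Q - m \<le> M" "(Q, m) = (\<lambda>(n, m). (n + m, m)) (Q - m, m)" using Qm(1) by auto
      with Qm(2) have "degree (G $ (Q - m)) < m" using D[of "Q - m"] by (auto simp: image_iff)
      then show ?thesis using True by (simp add: bcoeff_def coeff_subst_zt coeff_eq_0)
    qed (simp add: bcoeff_def coeff_subst_zt)
  qed simp
  also have "\<dots> = (\<Sum>(n, m)\<in>{..M} \<times> {..D}. if n + Suc k * m = M then bcoeff G n m else 0)"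
    by (subst sum.reindex) (auto simp: inj_on_def bcoeff_def coeff_subst_zt add.assoc intro!: sum.cong)
  also have "\<dots> = subst_zk (Suc k) G $ M"
    by (simp add: subst_zk_nth_degree_le[OF D] sum.cartesian_product)
  finally show "subst_zk k (subst_zt G) $ M = subst_zk (Suc k) G $ M" .
qed

lemma opE_fixpoint: "opE G = const_t (eval_t 1 G) - times_zt (subst_zt G) + times_zt (opE G)"
proof -
  define A where "A = const_t (eval_t 1 G) - times_zt (subst_zt G)"
  have geom: "geom_zt - times_zt geom_zt = 1"
  proof (rule fps_ext)
    fix n show "(geom_zt - times_zt geom_zt) $ n = 1 $ n"
      by (cases n) (simp_all add: times_zt_nth geom_zt_def monom_Suc)
  qed
  have "opE G - times_zt (opE G) = A * (geom_zt - times_zt geom_zt)"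
    unfolding opE_def A_def times_zt_def by (simp add: algebra_simps)
  then show ?thesis unfolding geom A_def by (simp add: algebra_simps)
qed

lemma eval_t_0_opE: "eval_t 0 (opE G) = eval_t 1 G"
  by (subst opE_fixpoint) (simp add: eval_t_add eval_t_diff eval_t_0_times_zt eval_t_const_t)

lemma subst_zk_opE:
  "(1 - fps_X ^ Suc k) * subst_zk k (opE G) = eval_t 1 G - fps_X ^ Suc k * subst_zk (Suc k) G"
proof -
  have "subst_zk k (opE G) = eval_t 1 G - fps_X ^ Suc k * subst_zk (Suc k) G
      + fps_X ^ Suc k * subst_zk k (opE G)"
    by (subst opE_fixpoint)
      (simp add: subst_zk_add subst_zk_diff subst_zk_times_zt subst_zk_const_t subst_zk_subst_zt)
  then show ?thesis by (simp add: algebra_simps)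
qed

lemma very_nice_opE:
  fixes G :: "'a::field bivar"
  assumes "nice G"
  shows "very_nice (opE G)"
proof -
  have rat: "rational_fps (subst_zk k G)" for k using assms by (simp add: nice_def)
  then have "rational_fps (eval_t 1 G)" by (simp add: eval_t_1_eq_subst_zk_0)
  moreover from this have "rational_fps (subst_zk k (opE G))" for k
    using subst_zk_opE[of k G]
    by (metis rat rational_fps_X_power_mult rational_fps_diff rational_fps_cancel_one_minus_X_power)
  ultimately show ?thesis by (simp add: very_nice_def nice_def eval_t_0_opE)
qed

lemma opE_nth_0: "G $ 0 = 0 \<Longrightarrow> opE G $ 0 = 0"
  by (subst opE_fixpoint) (simp add: times_zt_nth eval_t_def const_t_def)

subsection \<open>The operator \<open>\<N>\<close>\<close>

lemma sum_mult_add_eq_mod: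
  fixes f :: "nat \<Rightarrow> 'a::comm_monoid_add"
  assumes "n \<le> Q" "0 < m"
  shows "(\<Sum>i\<le>Q. \<Sum>j<m. if n + m * i + j = Q then f j else 0) = f ((Q - n) mod m)"
proof -
  define q r where "q = (Q - n) div m" and "r = (Q - n) mod m"
  have r: "r < m" using assms(2) unfolding r_def by simp
  have q: "q \<le> Q" unfolding q_def by (meson div_le_dividend diff_le_self order_trans)
  have "n + m * i + j = Q \<longleftrightarrow> i = q \<and> j = r" if "j < m" for i j
  proof
    assume "n + m * i + j = Q"
    then have "Q - n = m * i + j" by simp
    then show "i = q \<and> j = r" unfolding q_def r_def using that by simp
  next
    assume "i = q \<and> j = r"
    then show "n + m * i + j = Q"
      unfolding q_def r_def using assms(1) mult_div_mod_eq[of m "Q - n"] by simp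
  qed
  then have "(\<Sum>i\<le>Q. \<Sum>j<m. if n + m * i + j = Q then f j else 0)
      = (\<Sum>i\<le>Q. if i = q then \<Sum>j<m. if j = r then f j else 0 else 0)"
    by (intro sum.cong) auto
  also have "\<dots> = f r" using q r by simp
  finally show ?thesis unfolding r_def .
qed

lemma opN_nth:
  "opN G $ Q = [:bcoeff G Q 0:]
     + (\<Sum>n\<in>{1..Q}. \<Sum>m\<in>{1..degree (G $ n)}. monom (bcoeff G n m) ((Q - n) mod m))"
  unfolding opN_def fps_nth_Abs_fps
  by (intro arg_cong[where f="\<lambda>x. _ + x"] sum.cong refl) (simp add: sum_mult_add_eq_mod)

lemma coeff_opN_nth:
  "coeff (opN G $ Q) l = (if l = 0 then bcoeff G Q 0 else 0)
     + (\<Sum>n\<in>{1..Q}. \<Sum>m\<in>{1..degree (G $ n)}. if (Q - n) mod m = l then bcoeff G n m else 0)"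
  by (simp add: opN_nth coeff_sum coeff_monom coeff_pCons split: nat.split)

lemma degree_opN_nth: "degree (opN G $ Q) \<le> Q"
proof (rule degree_le, intro allI impI)
  fix l assume "Q < l"
  moreover have "(Q - n) mod m \<noteq> l" for n m
    using mod_less_eq_dividend[of "Q - n" m] \<open>Q < l\<close> by linarith
  ultimately show "coeff (opN G $ Q) l = 0"
    by (auto simp: coeff_opN_nth intro!: sum.neutral)
qed

text \<open>Substituting \<open>t = z^k\<close> into the \<open>\<N>\<close>-image of \<open>z^n t^m\<close> yields \<open>z^n \<Sum>\<^sub>s z^(s + k (s mod m))\<close>,
  so the coefficient of \<open>z^(n+r)\<close> counts the solutions \<open>s\<close> of \<open>s + k (s mod m) = r\<close>.\<close>
definition mod_count :: "nat \<Rightarrow> nat \<Rightarrow> nat \<Rightarrow> 'a::comm_ring_1" where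
  "mod_count k m r = (\<Sum>s\<le>r. if s + k * (s mod m) = r then 1 else 0)"

lemma mod_count_rec:
  assumes "0 < m"
  shows "(mod_count k m r :: 'a::comm_ring_1)
    = (if m \<le> r then mod_count k m (r - m) else 0) + (\<Sum>j<m. if r = Suc k * j then 1 else 0)"
proof -
  define g :: "nat \<Rightarrow> 'a" where "g = (\<lambda>s. if s + k * (s mod m) = r then 1 else 0)"
  define A B where "A = {s. s \<le> r \<and> s < m}" and "B = {s. s \<le> r \<and> m \<le> s}"
  have "{..r} = A \<union> B" "A \<inter> B = {}" "finite A" "finite B" unfolding A_def B_def by auto
  then have "mod_count k m r = sum g A + sum g B"
    unfolding mod_count_def g_def[symmetric] by (simp add: sum.union_disjoint)
  moreover have "sum g B = (if m \<le> r then mod_count k m (r - m) else 0)"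
  proof (cases "m \<le> r")
    case True
    have "B = (\<lambda>s. m + s) ` {..r - m}"
      unfolding B_def using True by (auto simp: image_iff) (metis atMost_iff diff_le_mono le_add_diff_inverse)
    then have "sum g B = (\<Sum>s\<le>r - m. g (m + s))" by (simp add: sum.reindex)
    also have "\<dots> = mod_count k m (r - m)"
      unfolding mod_count_def g_def using True by (intro sum.cong refl) auto
    finally show ?thesis using True by simp
  next
    case False
    then have "B = {}" unfolding B_def by auto
    then show ?thesis using False by simp
  qed
  moreover have "sum g A = (\<Sum>j<m. if r = Suc k * j then 1 else 0)"
    by (rule sum.mono_neutral_cong_left) (auto simp: A_def g_def)
  ultimately show ?thesis by simp
qed

lemma one_minus_X_power_mult_nth:
  fixes f :: "'a::comm_ring_1 fps"
  shows "((1 - fps_X ^ j) * f) $ r = f $ r - (if r < j then 0 else f $ (r - j))"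
proof -
  have "(1 - fps_X ^ j) * f = f - fps_X ^ j * f" by (simp add: algebra_simps)
  then show ?thesis by (simp add: fps_X_power_mult_nth)
qed

lemma one_minus_X_power_mult_mod_count:
  assumes "0 < m"
  shows "(1 - fps_X ^ m) * Abs_fps (mod_count k m) = (\<Sum>j<m. (fps_X ^ Suc k) ^ j :: 'a::comm_ring_1 fps)"
proof (rule fps_ext)
  fix r
  show "((1 - fps_X ^ m) * Abs_fps (mod_count k m)) $ r = (\<Sum>j<m. (fps_X ^ Suc k) ^ j :: 'a fps) $ r"
    using mod_count_rec[OF assms, of k r]
    by (auto simp: one_minus_X_power_mult_nth fps_sum_nth power_mult[symmetric] fps_X_power_nth
        simp del: power_Suc)
qed

lemma one_minus_X_power_Suc_mult_mod_count:
  assumes "0 < m"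
  shows "(1 - fps_X ^ Suc k) * Abs_fps (mod_count k m) = (\<Sum>i\<le>k. (fps_X ^ m) ^ i :: 'a::field fps)"
proof -
  have "(1 - fps_X ^ m :: 'a fps) $ 0 = 1" using assms by (simp add: fps_X_power_nth)
  then have nz: "(1 - fps_X ^ m :: 'a fps) \<noteq> 0" by (metis fps_nonzero_nth one_neq_zero)
  have "(1 - fps_X ^ m) * ((1 - fps_X ^ Suc k) * Abs_fps (mod_count k m))
      = (1 - fps_X ^ Suc k) * (\<Sum>j<m. (fps_X ^ Suc k) ^ j :: 'a fps)"
    using one_minus_X_power_mult_mod_count[OF assms, of k] by (simp add: mult.left_commute)
  also have "\<dots> = 1 - (fps_X ^ Suc k) ^ m" by (rule one_diff_power_eq[symmetric])
  also have "\<dots> = 1 - (fps_X ^ m) ^ Suc k" by (simp only: power_mult[symmetric] mult.commute)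
  also have "\<dots> = (1 - fps_X ^ m) * (\<Sum>i\<le>k. (fps_X ^ m) ^ i :: 'a fps)"
    by (simp add: one_diff_power_eq lessThan_Suc_atMost del: power_Suc)
  finally show ?thesis using nz by simp
qed

lemma mod_count_diff:
  assumes "0 < m"
  shows "(mod_count k m r :: 'a::field) - (if r < Suc k then 0 else mod_count k m (r - Suc k))
    = (\<Sum>i\<le>k. if r = m * i then 1 else 0)"
  using arg_cong[where f="\<lambda>f. f $ r", OF one_minus_X_power_Suc_mult_mod_count[OF assms, of k]]
  by (simp add: one_minus_X_power_mult_nth fps_sum_nth power_mult[symmetric] fps_X_power_nth
      del: power_Suc split: if_splits)

lemma sum_triangle_reindex:
  fixes M :: nat
  shows "(\<Sum>Q\<le>M. \<Sum>n\<in>{1..Q}. f Q n) = (\<Sum>n\<in>{1..M}. \<Sum>s\<le>M - n. f (n + s) n :: 'a::comm_monoid_add)"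
proof -
  have "(\<Sum>Q\<le>M. \<Sum>n\<in>{1..Q}. f Q n) = (\<Sum>(Q, n)\<in>(SIGMA Q:{..M}. {1..Q}). f Q n)"
    by (rule sum.Sigma) auto
  also have "\<dots> = (\<Sum>(n, s)\<in>(SIGMA n:{1..M}. {..M - n}). f (n + s) n)"
    by (rule sum.reindex_bij_witness[where i="\<lambda>(n, s). (n + s, n)" and j="\<lambda>(Q, n). (n, Q - n)"])
      auto
  also have "\<dots> = (\<Sum>n\<in>{1..M}. \<Sum>s\<le>M - n. f (n + s) n)"
    by (rule sum.Sigma[symmetric]) auto
  finally show ?thesis .
qed

lemma subst_zk_opN_nth:
  "subst_zk k (opN G) $ M = bcoeff G M 0
     + (\<Sum>n\<in>{1..M}. \<Sum>m\<in>{1..degree (G $ n)}. bcoeff G n m * mod_count k m (M - n))"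
proof -
  let ?a = "bcoeff G"
  have deg: "degree (opN G $ Q) \<le> M" if "Q \<le> M" for Q
    using degree_opN_nth[of G Q] that by linarith
  have "subst_zk k (opN G) $ M = (\<Sum>Q\<le>M. \<Sum>l\<le>M. if Q + k * l = M then coeff (opN G $ Q) l else 0)"
    by (simp only: subst_zk_nth_degree_le[OF deg] bcoeff_def)
  also have "\<dots> = (\<Sum>Q\<le>M. \<Sum>l\<le>M. if Q + k * l = M \<and> l = 0 then ?a Q 0 else 0)
      + (\<Sum>Q\<le>M. \<Sum>l\<le>M. \<Sum>n\<in>{1..Q}. \<Sum>m\<in>{1..degree (G $ n)}.
           if (Q - n) mod m = l then if Q + k * l = M then ?a n m else 0 else 0)"
    unfolding sum.distrib[symmetric]
    by (intro sum.cong refl, rename_tac Q l, case_tac "Q + k * l = M")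
      (simp_all add: coeff_opN_nth sum.neutral cong: if_cong)
  also have "(\<Sum>Q\<le>M. \<Sum>l\<le>M. if Q + k * l = M \<and> l = 0 then ?a Q 0 else 0) = ?a M 0"
  proof -
    have "(\<Sum>l\<le>M. if Q + k * l = M \<and> l = 0 then ?a Q 0 else 0) = (if Q = M then ?a Q 0 else 0)" for Q
      by (subst sum.cong[where h="\<lambda>l. if l = 0 then if Q = M then ?a Q 0 else 0 else 0"]) auto
    then show ?thesis by simp
  qed
  also have "(\<Sum>Q\<le>M. \<Sum>l\<le>M. \<Sum>n\<in>{1..Q}. \<Sum>m\<in>{1..degree (G $ n)}.
           if (Q - n) mod m = l then if Q + k * l = M then ?a n m else 0 else 0)
      = (\<Sum>Q\<le>M. \<Sum>n\<in>{1..Q}. \<Sum>m\<in>{1..degree (G $ n)}.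
           if Q + k * ((Q - n) mod m) = M then ?a n m else 0)"
  proof (rule sum.cong[OF refl])
    fix Q assume "Q \<in> {..M}"
    then have le: "(Q - n) mod m \<le> M" for n m
      by (meson atMost_iff diff_le_self le_trans mod_less_eq_dividend)
    have "(\<Sum>l\<le>M. \<Sum>n\<in>{1..Q}. \<Sum>m\<in>{1..degree (G $ n)}.
           if (Q - n) mod m = l then if Q + k * l = M then ?a n m else 0 else 0)
        = (\<Sum>n\<in>{1..Q}. \<Sum>m\<in>{1..degree (G $ n)}. \<Sum>l\<le>M.
           if (Q - n) mod m = l then if Q + k * l = M then ?a n m else 0 else 0)"
      by (subst sum.swap) (intro sum.cong refl sum.swap)
    also have "\<dots> = (\<Sum>n\<in>{1..Q}. \<Sum>m\<in>{1..degree (G $ n)}.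
           if Q + k * ((Q - n) mod m) = M then ?a n m else 0)"
      using le by (intro sum.cong refl) (simp add: sum.delta')
    finally show "(\<Sum>l\<le>M. \<Sum>n\<in>{1..Q}. \<Sum>m\<in>{1..degree (G $ n)}.
           if (Q - n) mod m = l then if Q + k * l = M then ?a n m else 0 else 0)
        = (\<Sum>n\<in>{1..Q}. \<Sum>m\<in>{1..degree (G $ n)}.
           if Q + k * ((Q - n) mod m) = M then ?a n m else 0)" .
  qed
  also have "\<dots> = (\<Sum>n\<in>{1..M}. \<Sum>s\<le>M - n. \<Sum>m\<in>{1..degree (G $ n)}.
           if n + s + k * (s mod m) = M then ?a n m else 0)"
    unfolding sum_triangle_reindex by simp
  also have "\<dots> = (\<Sum>n\<in>{1..M}. \<Sum>m\<in>{1..degree (G $ n)}. ?a n m * mod_count k m (M - n))"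
    unfolding mod_count_def sum_distrib_left
    by (subst sum.swap) (auto intro!: sum.cong)
  finally show ?thesis .
qed

lemma subst_zk_nth_eq_bcoeff_add:
  assumes "G $ 0 = 0"
  shows "subst_zk i G $ M = bcoeff G M 0
    + (\<Sum>n\<in>{1..M}. \<Sum>m\<in>{1..degree (G $ n)}. if n + i * m = M then bcoeff G n m else 0)"
proof -
  have a0: "bcoeff G 0 m = 0" for m using assms by (simp add: bcoeff_def)
  have "subst_zk i G $ M
      = (\<Sum>n\<in>{1..M}. \<Sum>m\<le>degree (G $ n). if n + i * m = M then bcoeff G n m else 0)"
    unfolding subst_zk_def fps_nth_Abs_fps
    by (rule sum.mono_neutral_right) (auto simp: a0 not_less_eq_eq intro!: sum.neutral)
  also have "\<dots> = (\<Sum>n\<in>{1..M}. (if n = M then bcoeff G n 0 else 0)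
      + (\<Sum>m\<in>{1..degree (G $ n)}. if n + i * m = M then bcoeff G n m else 0))"
  proof (rule sum.cong[OF refl])
    fix n
    have "{..degree (G $ n)} = insert 0 {1..degree (G $ n)}" by auto
    then show "(\<Sum>m\<le>degree (G $ n). if n + i * m = M then bcoeff G n m else 0)
      = (if n = M then bcoeff G n 0 else 0)
        + (\<Sum>m\<in>{1..degree (G $ n)}. if n + i * m = M then bcoeff G n m else 0)"
      by simp
  qed
  also have "\<dots> = bcoeff G M 0
      + (\<Sum>n\<in>{1..M}. \<Sum>m\<in>{1..degree (G $ n)}. if n + i * m = M then bcoeff G n m else 0)"
    using a0 by (cases M) (simp_all add: sum.distrib)
  finally show ?thesis .
qed

lemma mod_count_sum_diff:
  fixes c :: "nat \<Rightarrow> nat \<Rightarrow> 'a::field" and d :: "nat \<Rightarrow> nat"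
  shows "(\<Sum>n\<in>{1..M}. \<Sum>m\<in>{1..d n}. c n m * mod_count k m (M - n))
    - (if M < Suc k then 0
       else \<Sum>n\<in>{1..M - Suc k}. \<Sum>m\<in>{1..d n}. c n m * mod_count k m (M - Suc k - n))
    = (\<Sum>i\<le>k. \<Sum>n\<in>{1..M}. \<Sum>m\<in>{1..d n}. if n + i * m = M then c n m else 0)"
proof -
  have shifted: "(if M < Suc k then 0
       else \<Sum>n\<in>{1..M - Suc k}. \<Sum>m\<in>{1..d n}. c n m * mod_count k m (M - Suc k - n))
    = (\<Sum>n\<in>{1..M}. \<Sum>m\<in>{1..d n}.
         c n m * (if M - n < Suc k then 0 else mod_count k m (M - n - Suc k)))"
  proof (cases "M < Suc k")
    case False
    have "(\<Sum>n\<in>{1..M - Suc k}. \<Sum>m\<in>{1..d n}. c n m * mod_count k m (M - Suc k - n))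
      = (\<Sum>n\<in>{1..M}. \<Sum>m\<in>{1..d n}.
           c n m * (if M - n < Suc k then 0 else mod_count k m (M - n - Suc k)))"
    proof (rule sum.mono_neutral_cong_left)
      show "\<forall>n\<in>{1..M} - {1..M - Suc k}. (\<Sum>m\<in>{1..d n}.
           c n m * (if M - n < Suc k then 0 else mod_count k m (M - n - Suc k))) = 0"
        using False by (auto intro!: sum.neutral)
    qed (use False in \<open>auto intro!: sum.cong simp: diff_commute add.commute\<close>)
    then show ?thesis using False by simp
  qed (auto intro!: sum.neutral)
  have "(\<Sum>n\<in>{1..M}. \<Sum>m\<in>{1..d n}. c n m * mod_count k m (M - n)) - (\<Sum>n\<in>{1..M}. \<Sum>m\<in>{1..d n}.
         c n m * (if M - n < Suc k then 0 else mod_count k m (M - n - Suc k)))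
    = (\<Sum>n\<in>{1..M}. \<Sum>m\<in>{1..d n}. c n m * (\<Sum>i\<le>k. if M - n = m * i then 1 else 0))"
    by (simp add: sum_subtractf[symmetric] right_diff_distrib[symmetric] mod_count_diff)
  also have "\<dots> = (\<Sum>n\<in>{1..M}. \<Sum>i\<le>k. \<Sum>m\<in>{1..d n}. if n + i * m = M then c n m else 0)"
    unfolding sum_distrib_left
    by (rule sum.cong[OF refl], subst sum.swap) (auto intro!: sum.cong simp: mult.commute)
  also have "\<dots> = (\<Sum>i\<le>k. \<Sum>n\<in>{1..M}. \<Sum>m\<in>{1..d n}. if n + i * m = M then c n m else 0)"
    by (rule sum.swap)
  finally show ?thesis by (simp only: shifted)
qed

text \<open>A term \<open>a z^n t^m\<close> with \<open>m \<ge> 1\<close> contributes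
  \<open>a z^n (1 + z^m + \<dots> + z^(k m)) / (1 - z^(k+1))\<close> to \<open>(\<N> G)(z, z^k)\<close>.\<close>
lemma subst_zk_opN:
  fixes G :: "'a::field bivar"
  assumes "G $ 0 = 0"
  shows "(1 - fps_X ^ Suc k) * subst_zk k (opN G)
    = (1 - fps_X ^ Suc k) * eval_t 0 G + (\<Sum>i\<le>k. subst_zk i G - eval_t 0 G)"
proof (rule fps_ext)
  fix M
  define B where "B r = (\<Sum>n\<in>{1..r}. \<Sum>m\<in>{1..degree (G $ n)}. bcoeff G n m * mod_count k m (r - n))"
    for r
  have subst_opN: "subst_zk k (opN G) $ r = bcoeff G r 0 + B r" for r
    by (simp add: subst_zk_opN_nth B_def)
  have eval_0: "eval_t 0 G $ r = bcoeff G r 0" for r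
    by (simp add: eval_t_def bcoeff_def poly_0_coeff_0)
  have "B M - (if M < Suc k then 0 else B (M - Suc k)) = (\<Sum>i\<le>k. subst_zk i G $ M - bcoeff G M 0)"
    unfolding B_def mod_count_sum_diff by (simp add: subst_zk_nth_eq_bcoeff_add[OF assms])
  then show "((1 - fps_X ^ Suc k) * subst_zk k (opN G)) $ M
    = ((1 - fps_X ^ Suc k) * eval_t 0 G + (\<Sum>i\<le>k. subst_zk i G - eval_t 0 G)) $ M"
    by (simp add: one_minus_X_power_mult_nth subst_opN eval_0 fps_sum_nth del: power_Suc split: if_splits)
qed

lemma nice_opN:
  fixes G :: "'a::field bivar"
  assumes "G $ 0 = 0" "very_nice G"
  shows "nice (opN G)"
  unfolding nice_def
proof
  fix k
  have "rational_fps (eval_t 0 G)" "\<And>i. rational_fps (subst_zk i G)"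
    using assms(2) by (auto simp: very_nice_def nice_def)
  then have "rational_fps ((1 - fps_X ^ Suc k) * eval_t 0 G + (\<Sum>i\<le>k. subst_zk i G - eval_t 0 G))"
    unfolding fps_of_poly_one_minus_monom[symmetric]
    by (intro rational_fps_add rational_fps_poly_mult rational_fps_sum rational_fps_diff)
  then show "rational_fps (subst_zk k (opN G))"
    unfolding subst_zk_opN[OF assms(1), symmetric] by (rule rational_fps_cancel_one_minus_X_power)
qed

lemma opN_nth_0: "G $ 0 = 0 \<Longrightarrow> opN G $ 0 = 0"
  by (simp add: opN_nth bcoeff_def)

subsection \<open>Sequences of operators\<close>

lemma no_consecutive_N_Cons:
  "no_consecutive_N (\<theta> # \<Theta>) \<longleftrightarrow> no_consecutive_N \<Theta> \<and> (\<theta> = N \<longrightarrow> \<Theta> = [] \<or> hd \<Theta> \<noteq> N)"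
proof -
  have split_0: "(\<forall>i. P i) \<longleftrightarrow> P 0 \<and> (\<forall>i. P (Suc i))" for P :: "nat \<Rightarrow> bool"
    by (metis not0_implies_Suc)
  show ?thesis
    unfolding no_consecutive_N_def split_0[where P="\<lambda>i. Suc i < length (\<theta> # \<Theta>) \<longrightarrow> _ i"]
    by (cases \<Theta>) auto
qed

lemma apply_ops_Cons: "apply_ops (\<theta> # \<Theta>) F = apply_ops \<Theta> (apply_op \<theta> F)"
  by (simp add: apply_ops_def)

lemma nice_apply_ops:
  fixes F :: "'a::field bivar"
  assumes "F $ 0 = 0" "nice F" "no_consecutive_N \<Theta>"
    and "\<Theta> \<noteq> [] \<Longrightarrow> hd \<Theta> = N \<Longrightarrow> very_nice F"
  shows "nice (apply_ops \<Theta> F)"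
  using assms
proof (induction \<Theta> arbitrary: F)
  case Nil
  then show ?case by (simp add: apply_ops_def)
next
  case (Cons \<theta> \<Theta>)
  show ?case
  proof (cases \<theta>)
    case E
    then show ?thesis
      using Cons.IH[of "opE F"] Cons.prems very_nice_opE[of F] opE_nth_0[of F]
      by (simp add: apply_ops_Cons no_consecutive_N_Cons very_nice_def)
  next
    case N
    then show ?thesis
      using Cons.IH[of "opN F"] Cons.prems nice_opN[of F] opN_nth_0[of F]
      by (auto simp: apply_ops_Cons no_consecutive_N_Cons)
  qed
qed

theorem mainTheorem7:
  fixes F :: "'a::field_char_0 bivar" and \<Theta> :: "op list"
  assumes "F $ 0 = 0"
    and "very_nice F"
    and "no_consecutive_N \<Theta>"
  shows "rational_fps (eval_t 1 (apply_ops \<Theta> F))"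
proof -
  have "nice (apply_ops \<Theta> F)"
    using nice_apply_ops[OF assms(1) _ assms(3)] assms(2) by (simp add: very_nice_def)
  then show ?thesis by (simp add: nice_def eval_t_1_eq_subst_zk_0)
qed

end
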